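(* Let $\mathcal{E}[t_{\mathcal{E}}]$ be a locally convex space and let $\{\xi_n\}\subset\mathcal{E}$ be a Schauder basis of $\mathcal{E}[t_{\mathcal{E}}]$. Assume that there exists a one-to-one continuous linear map $T$ from $\mathcal{E}[t_{\mathcal{E}}]$ into some Hilbert space $\mathcal{K}[\|\cdot\|]$ such that $\{T\xi_n\}$ is an orthonormal basis of $\mathcal{K}$. Then there exists an inner product $\langle\cdot,\cdot\rangle_+$ on $\mathcal{E}\times\mathcal{E}$ such that the topology induced on $\mathcal{E}$ by the corresponding norm $\|\cdot\|_+$ is coarser than $t_{\mathcal{E}}$ and $\{\xi_n\}$ is an orthonormal basis with respect to $\langle\cdot,\cdot\rangle_+$.
   Context: A sequence $\{\xi_n\}$ in a locally convex space $\mathcal{E}[t_{\mathcal{E}}]$ is a topological basis if every $\phi\in\mathcal{E}$ can be written uniquely as $\phi=\sum_{n=1}^\infty c_n\xi_n$ with the series converging in $\mathcal{E}[t_{\mathcal{E}}]$; it is a Schauder basis if, in addition, the coefficient functionals $\phi\mapsto c_n(\phi)$ are $t_{\mathcal{E}}$-continuous. *)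

theory Defs
  imports "HOL-Analysis.Analysis"
begin

text \<open>Complex vector spaces are modelled as an additive abelian group type
  together with an explicit complex scalar multiplication sm.\<close>

definition cvs :: "(complex \<Rightarrow> 'a::ab_group_add \<Rightarrow> 'a) \<Rightarrow> bool" where
  "cvs sm \<longleftrightarrow>
     (\<forall>c x y. sm c (x + y) = sm c x + sm c y) \<and>
     (\<forall>a b x. sm (a + b) x = sm a x + sm b x) \<and>
     (\<forall>a b x. sm a (sm b x) = sm (a * b) x) \<and>
     (\<forall>x. sm 1 x = x)"

definition clinear_map ::
  "(complex \<Rightarrow> 'a::ab_group_add \<Rightarrow> 'a) \<Rightarrow> (complex \<Rightarrow> 'b::ab_group_add \<Rightarrow> 'b) \<Rightarrow> ('a \<Rightarrow> 'b) \<Rightarrow> bool" where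
  "clinear_map smA smB T \<longleftrightarrow>
     (\<forall>x y. T (x + y) = T x + T y) \<and> (\<forall>c x. T (smA c x) = smB c (T x))"

definition cconvex :: "(complex \<Rightarrow> 'a::ab_group_add \<Rightarrow> 'a) \<Rightarrow> 'a set \<Rightarrow> bool" where
  "cconvex sm V \<longleftrightarrow> (\<forall>x\<in>V. \<forall>y\<in>V. \<forall>u::real. 0 \<le> u \<and> u \<le> 1 \<longrightarrow>
      sm (complex_of_real u) x + sm (complex_of_real (1 - u)) y \<in> V)"

definition locally_convex_space ::
  "(complex \<Rightarrow> 'a::ab_group_add \<Rightarrow> 'a) \<Rightarrow> 'a topology \<Rightarrow> bool" where
  "locally_convex_space sm \<tau> \<longleftrightarrow>
     cvs sm \<and> topspace \<tau> = UNIV \<and>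
     continuous_map (prod_topology \<tau> \<tau>) \<tau> (\<lambda>(x, y). x + y) \<and>
     continuous_map (prod_topology (euclidean :: complex topology) \<tau>) \<tau> (\<lambda>(c, x). sm c x) \<and>
     (\<forall>U. openin \<tau> U \<and> 0 \<in> U \<longrightarrow> (\<exists>V. openin \<tau> V \<and> 0 \<in> V \<and> cconvex sm V \<and> V \<subseteq> U))"

definition inner_product ::
  "(complex \<Rightarrow> 'a::ab_group_add \<Rightarrow> 'a) \<Rightarrow> ('a \<Rightarrow> 'a \<Rightarrow> complex) \<Rightarrow> bool" where
  "inner_product sm ip \<longleftrightarrow>
     (\<forall>x y z. ip (x + y) z = ip x z + ip y z) \<and>
     (\<forall>c x y. ip (sm c x) y = c * ip x y) \<and>
     (\<forall>x y. ip y x = cnj (ip x y)) \<and>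
     (\<forall>x. x \<noteq> 0 \<longrightarrow> Re (ip x x) > 0)"

definition ipnorm :: "('a \<Rightarrow> 'a \<Rightarrow> complex) \<Rightarrow> 'a \<Rightarrow> real" where
  "ipnorm ip x = sqrt (Re (ip x x))"

definition norm_open :: "('a::ab_group_add \<Rightarrow> real) \<Rightarrow> 'a set \<Rightarrow> bool" where
  "norm_open N U \<longleftrightarrow> (\<forall>x\<in>U. \<exists>e>0. \<forall>y. N (y - x) < e \<longrightarrow> y \<in> U)"

definition norm_tendsto :: "('a::ab_group_add \<Rightarrow> real) \<Rightarrow> (nat \<Rightarrow> 'a) \<Rightarrow> 'a \<Rightarrow> bool" where
  "norm_tendsto N f l \<longleftrightarrow> (\<lambda>n. N (f n - l)) \<longlonglongrightarrow> 0"

definition norm_Cauchy :: "('a::ab_group_add \<Rightarrow> real) \<Rightarrow> (nat \<Rightarrow> 'a) \<Rightarrow> bool" where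
  "norm_Cauchy N f \<longleftrightarrow> (\<forall>e>0. \<exists>M. \<forall>m\<ge>M. \<forall>n\<ge>M. N (f m - f n) < e)"

definition hilbert_space ::
  "(complex \<Rightarrow> 'a::ab_group_add \<Rightarrow> 'a) \<Rightarrow> ('a \<Rightarrow> 'a \<Rightarrow> complex) \<Rightarrow> bool" where
  "hilbert_space sm ip \<longleftrightarrow> cvs sm \<and> inner_product sm ip \<and>
     (\<forall>f. norm_Cauchy (ipnorm ip) f \<longrightarrow> (\<exists>l. norm_tendsto (ipnorm ip) f l))"

definition orthonormal_basis ::
  "(complex \<Rightarrow> 'a::ab_group_add \<Rightarrow> 'a) \<Rightarrow> ('a \<Rightarrow> 'a \<Rightarrow> complex) \<Rightarrow> (nat \<Rightarrow> 'a) \<Rightarrow> bool" where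
  "orthonormal_basis sm ip e \<longleftrightarrow>
     (\<forall>m n. ip (e m) (e n) = (if m = n then 1 else 0)) \<and>
     (\<forall>x. norm_tendsto (ipnorm ip) (\<lambda>n. \<Sum>k<n. sm (ip x (e k)) (e k)) x)"

definition topological_basis_seq ::
  "(complex \<Rightarrow> 'a::ab_group_add \<Rightarrow> 'a) \<Rightarrow> 'a topology \<Rightarrow> (nat \<Rightarrow> 'a) \<Rightarrow> bool" where
  "topological_basis_seq sm \<tau> \<xi> \<longleftrightarrow>
     (\<forall>\<phi>. \<exists>!c::nat \<Rightarrow> complex. limitin \<tau> (\<lambda>n. \<Sum>k<n. sm (c k) (\<xi> k)) \<phi> sequentially)"

definition basis_coeff ::
  "(complex \<Rightarrow> 'a::ab_group_add \<Rightarrow> 'a) \<Rightarrow> 'a topology \<Rightarrow> (nat \<Rightarrow> 'a) \<Rightarrow> 'a \<Rightarrow> nat \<Rightarrow> complex" where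
  "basis_coeff sm \<tau> \<xi> \<phi> =
     (THE c. limitin \<tau> (\<lambda>n. \<Sum>k<n. sm (c k) (\<xi> k)) \<phi> sequentially)"

definition schauder_basis ::
  "(complex \<Rightarrow> 'a::ab_group_add \<Rightarrow> 'a) \<Rightarrow> 'a topology \<Rightarrow> (nat \<Rightarrow> 'a) \<Rightarrow> bool" where
  "schauder_basis sm \<tau> \<xi> \<longleftrightarrow> topological_basis_seq sm \<tau> \<xi> \<and>
     (\<forall>n. continuous_map \<tau> (euclidean :: complex topology) (\<lambda>\<phi>. basis_coeff sm \<tau> \<xi> \<phi> n))"

end

theory Submission
  imports Defs
begin

text \<open>The inner product is pulled back along T: \<open>\<langle>x, y\<rangle>\<^sub>+ = \<langle>T x, T y\<rangle>\<close>.
  Injectivity of T makes it definite and \<xi> is orthonormal for it because \<open>T \<xi>\<close> is.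
  Since T is an isometry for \<open>\<parallel>\<cdot>\<parallel>\<^sub>+\<close>, a \<open>\<parallel>\<cdot>\<parallel>\<^sub>+\<close>-open set U is the T-preimage of the
  open set \<open>\<Union>\<^sub>x\<^sub>\<in>\<^sub>U B(T x, \<epsilon>\<^sub>x)\<close>, hence \<tau>-open by continuity of T.\<close>

context
  fixes sm :: "complex \<Rightarrow> 'a::ab_group_add \<Rightarrow> 'a" and ip :: "'a \<Rightarrow> 'a \<Rightarrow> complex"
  assumes ip: "inner_product sm ip"
begin

lemma ip_cnj: "ip y x = cnj (ip x y)"
  using ip unfolding inner_product_def by blast

lemma ip_add_left: "ip (x + y) z = ip x z + ip y z"
  using ip unfolding inner_product_def by blast

lemma ip_scale_left: "ip (sm c x) y = c * ip x y"
  using ip unfolding inner_product_def by blast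

lemma ip_pos: "x \<noteq> 0 \<Longrightarrow> Re (ip x x) > 0"
  using ip unfolding inner_product_def by blast

lemma ip_diff_left: "ip (x - y) z = ip x z - ip y z"
  using ip_add_left[of "x - y" y z] by (simp add: eq_diff_eq)

lemma ip_add_right: "ip z (x + y) = ip z x + ip z y"
  by (metis ip_add_left ip_cnj complex_cnj_add)

lemma ip_diff_right: "ip z (x - y) = ip z x - ip z y"
  by (metis ip_diff_left ip_cnj complex_cnj_diff)

lemma ip_scale_right: "ip x (sm c y) = cnj c * ip x y"
  by (metis ip_scale_left ip_cnj complex_cnj_mult)

lemma ip_zero_left [simp]: "ip 0 z = 0"
  using ip_diff_left[of 0 0 z] by simp

lemma ip_zero_right [simp]: "ip z 0 = 0"
  using ip_diff_right[of z 0 0] by simp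

lemma ip_self_real: "ip x x = complex_of_real (Re (ip x x))"
  using ip_cnj[of x x] by (simp add: complex_eq_iff)

lemma ip_self_nonneg: "0 \<le> Re (ip x x)"
  using ip_pos[of x] by (cases "x = 0") auto

lemma ip_Cauchy_Schwarz: "(cmod (ip a b))\<^sup>2 \<le> Re (ip a a) * Re (ip b b)"
proof (cases "b = 0")
  case True
  then show ?thesis by simp
next
  case False
  define \<beta> where "\<beta> = Re (ip b b)"
  define p where "p = ip a b"
  define t where "t = p / complex_of_real \<beta>"
  have \<beta>_pos: "\<beta> > 0"
    using ip_pos[OF False] by (simp add: \<beta>_def)
  have pp: "cnj p * p = complex_of_real ((cmod p)\<^sup>2)"
    by (metis complex_norm_square mult.commute)
  \<comment> \<open>Expand \<open>0 \<le> \<langle>a - t b, a - t b\<rangle>\<close> for the projection coefficient \<open>t = \<langle>a,b\<rangle>/\<langle>b,b\<rangle>\<close>.\<close>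
  have "ip (a - sm t b) (a - sm t b)
      = ip a a - cnj t * p - t * cnj p + t * cnj t * complex_of_real \<beta>"
    using ip_self_real[of b] ip_cnj[of a b]
    by (simp add: ip_diff_left ip_diff_right ip_scale_left ip_scale_right
        flip: p_def \<beta>_def) (simp add: algebra_simps)
  also have "\<dots> = ip a a - complex_of_real ((cmod p)\<^sup>2 / \<beta>)"
    using pp \<beta>_pos by (simp add: t_def field_simps)
  finally have "(cmod p)\<^sup>2 / \<beta> \<le> Re (ip a a)"
    using ip_self_nonneg[of "a - sm t b"] by simp
  then show ?thesis
    using \<beta>_pos by (simp add: p_def \<beta>_def field_simps)
qed

lemma ipnorm_zero [simp]: "ipnorm ip 0 = 0"
  by (simp add: ipnorm_def)

lemma ipnorm_triangle: "ipnorm ip (a + b) \<le> ipnorm ip a + ipnorm ip b"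
proof -
  have sq_a: "(ipnorm ip a)\<^sup>2 = Re (ip a a)" and sq_b: "(ipnorm ip b)\<^sup>2 = Re (ip b b)"
    by (simp_all add: ipnorm_def ip_self_nonneg)
  have "Re (ip a b) \<le> cmod (ip a b)"
    by (rule complex_Re_le_cmod)
  also have "\<dots> \<le> sqrt (Re (ip a a) * Re (ip b b))"
    using ip_Cauchy_Schwarz by (rule real_le_rsqrt)
  finally have cross: "Re (ip a b) \<le> ipnorm ip a * ipnorm ip b"
    by (simp add: ipnorm_def real_sqrt_mult)
  have "Re (ip (a + b) (a + b)) = Re (ip a a) + Re (ip b b) + 2 * Re (ip a b)"
    using ip_cnj[of a b] by (simp add: ip_add_left ip_add_right)
  also have "\<dots> \<le> (ipnorm ip a + ipnorm ip b)\<^sup>2"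
    using cross sq_a sq_b by (simp add: power2_eq_square algebra_simps)
  finally show ?thesis
    unfolding ipnorm_def[of ip "a + b"]
    by (metis ipnorm_def real_sqrt_ge_zero add_nonneg_nonneg real_le_lsqrt ip_self_nonneg)
qed

end

lemma clinear_map_zero: "clinear_map smA smB T \<Longrightarrow> T 0 = 0"
  unfolding clinear_map_def by (metis add.right_neutral add_left_cancel)

lemma clinear_map_diff: "clinear_map smA smB T \<Longrightarrow> T (x - y) = T x - T y"
  unfolding clinear_map_def by (metis add_diff_cancel eq_diff_eq)

lemma clinear_map_sum: "clinear_map smA smB T \<Longrightarrow> T (\<Sum>k<(n::nat). f k) = (\<Sum>k<n. T (f k))"
  by (induction n) (auto simp: clinear_map_zero clinear_map_def)

lemma norm_open_preimage_subadditive: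
  fixes N :: "'b::ab_group_add \<Rightarrow> real" and T :: "'a::ab_group_add \<Rightarrow> 'b"
  assumes subadd: "\<And>u v. N (u + v) \<le> N u + N v" and "N 0 = 0"
    and T_diff: "\<And>x y. T (x - y) = T x - T y"
    and U: "norm_open (\<lambda>x. N (T x)) U"
  shows "\<exists>V. norm_open N V \<and> T -` V = U"
proof -
  define V where "V = {w. \<exists>x\<in>U. \<exists>e>0. (\<forall>y. N (T (y - x)) < e \<longrightarrow> y \<in> U) \<and> N (w - T x) < e}"
  have "norm_open N V"
    unfolding norm_open_def
  proof
    fix w assume "w \<in> V"
    then obtain x e where x: "x \<in> U" "e > 0" "\<forall>y. N (T (y - x)) < e \<longrightarrow> y \<in> U"
      and w: "N (w - T x) < e"
      unfolding V_def by blast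
    have "w' \<in> V" if "N (w' - w) < e - N (w - T x)" for w'
    proof -
      have "N (w' - T x) \<le> N (w' - w) + N (w - T x)"
        using subadd[of "w' - w" "w - T x"] by simp
      then show ?thesis
        unfolding V_def using x that by force
    qed
    then show "\<exists>d>0. \<forall>w'. N (w' - w) < d \<longrightarrow> w' \<in> V"
      using w by (intro exI[of _ "e - N (w - T x)"]) auto
  qed
  moreover have "T -` V = U"
  proof
    show "T -` V \<subseteq> U"
      unfolding V_def by (auto simp: T_diff)
    show "U \<subseteq> T -` V"
      using U \<open>N 0 = 0\<close> unfolding norm_open_def V_def by force
  qed
  ultimately show ?thesis by blast
qed

definition pullback_ip :: "('a \<Rightarrow> 'b) \<Rightarrow> ('b \<Rightarrow> 'b \<Rightarrow> complex) \<Rightarrow> 'a \<Rightarrow> 'a \<Rightarrow> complex" where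
  "pullback_ip T ip = (\<lambda>x y. ip (T x) (T y))"

lemma ipnorm_pullback_ip: "ipnorm (pullback_ip T ip) = (\<lambda>x. ipnorm ip (T x))"
  by (simp add: ipnorm_def pullback_ip_def fun_eq_iff)

lemma inner_product_pullback_ip:
  assumes "inner_product smB ip" "clinear_map smA smB T" "inj T"
  shows "inner_product smA (pullback_ip T ip)"
  unfolding inner_product_def pullback_ip_def
proof (intro conjI allI impI)
  fix x y z c
  show "ip (T (x + y)) (T z) = ip (T x) (T z) + ip (T y) (T z)"
    using assms by (simp add: clinear_map_def ip_add_left)
  show "ip (T (smA c x)) (T y) = c * ip (T x) (T y)"
    using assms by (simp add: clinear_map_def ip_scale_left)
  show "ip (T y) (T x) = cnj (ip (T x) (T y))"
    using assms(1) by (rule ip_cnj)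
  assume "x \<noteq> 0"
  then have "T x \<noteq> 0"
    using assms(2,3) clinear_map_zero by (metis injD)
  with assms(1) show "0 < Re (ip (T x) (T x))"
    by (rule ip_pos)
qed

lemma orthonormal_basis_pullback_ip:
  assumes "orthonormal_basis smB ip (\<lambda>n. T (e n))" "clinear_map smA smB T"
  shows "orthonormal_basis smA (pullback_ip T ip) e"
proof -
  have "ipnorm (pullback_ip T ip) ((\<Sum>k<n. smA (pullback_ip T ip x (e k)) (e k)) - x)
      = ipnorm ip ((\<Sum>k<n. smB (ip (T x) (T (e k))) (T (e k))) - T x)" for x n
    using assms(2)
    by (simp add: ipnorm_pullback_ip clinear_map_diff clinear_map_sum)
       (simp add: clinear_map_def pullback_ip_def)
  then show ?thesis
    using assms(1) by (simp add: orthonormal_basis_def norm_tendsto_def pullback_ip_def)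
qed

theorem proposition2p5:
  fixes sm :: "complex \<Rightarrow> 'a::ab_group_add \<Rightarrow> 'a"
    and \<tau> :: "'a topology"
    and \<xi> :: "nat \<Rightarrow> 'a"
    and smK :: "complex \<Rightarrow> 'b::ab_group_add \<Rightarrow> 'b"
    and ipK :: "'b \<Rightarrow> 'b \<Rightarrow> complex"
    and T :: "'a \<Rightarrow> 'b"
  assumes "locally_convex_space sm \<tau>"
    and "schauder_basis sm \<tau> \<xi>"
    and "hilbert_space smK ipK"
    and "clinear_map sm smK T"
    and "inj T"
    and "\<forall>U. norm_open (ipnorm ipK) U \<longrightarrow> openin \<tau> (T -` U)"
    and "orthonormal_basis smK ipK (\<lambda>n. T (\<xi> n))"
  shows "\<exists>ip :: 'a \<Rightarrow> 'a \<Rightarrow> complex.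
           inner_product sm ip \<and>
           (\<forall>U. norm_open (ipnorm ip) U \<longrightarrow> openin \<tau> U) \<and>
           orthonormal_basis sm ip \<xi>"
proof (intro exI conjI allI impI)
  have ipK: "inner_product smK ipK"
    using assms(3) by (simp add: hilbert_space_def)
  show "inner_product sm (pullback_ip T ipK)"
    using ipK assms(4,5) by (rule inner_product_pullback_ip)
  show "orthonormal_basis sm (pullback_ip T ipK) \<xi>"
    using assms(7,4) by (rule orthonormal_basis_pullback_ip)
  fix U assume "norm_open (ipnorm (pullback_ip T ipK)) U"
  then have "norm_open (\<lambda>x. ipnorm ipK (T x)) U"
    by (simp add: ipnorm_pullback_ip)
  then obtain V where "norm_open (ipnorm ipK) V" "T -` V = U"
    using norm_open_preimage_subadditive[of "ipnorm ipK" T U]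
      ipnorm_triangle[OF ipK] ipnorm_zero[OF ipK] clinear_map_diff[OF assms(4)]
    by blast
  then show "openin \<tau> U"
    using assms(6) by blast
qed

end
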